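(* Let $y(t)$ solve $\dot y_k=v_k(Q(y))$, $k\in\mathcal{N}$, let $x(t)=Q(y(t))$, and let $p_k,p_k'\in\mathcal{X}_k$ with $p_k\preccurlyeq p_k'$. Then either $p_k$ becomes extinct along $x(t)$ (i.e. $\min\{x_{k\alpha}(t):\alpha\in\operatorname{supp}(p_k)\}\to0$), or every $\alpha_{-k}\in\mathcal{A}_{-k}\equiv\prod_{\ell\neq k}\mathcal{A}_\ell$ such that $u_k(p_k;\alpha_{-k})<u_k(p_k';\alpha_{-k})$ becomes extinct along $x(t)$ (i.e. $\prod_{\ell\ne k}x_{\ell,\alpha_\ell}(t)\to0$); the two alternatives are not mutually exclusive.
   Context: Setting: finite game with players $\mathcal{N}$, action sets $\mathcal{A}_k$, mixed strategies $\mathcal{X}_k=\Delta(\mathcal{A}_k)$, multilinear expected payoffs $u_k$, payoff vectors $v_k(x)=(u_k(\alpha;x_{-k}))_{\alpha\in\mathcal{A}_k}$. Each player has a penalty function $h_k$ on $\mathcal{X}_k$ (continuous, $C^\infty$ on relative interiors of faces, strongly convex: $h(tx_1+(1-t)x_2)\le th(x_1)+(1-t)h(x_2)-\tfrac12Kt(1-t)\|x_1-x_2\|^2$, $K>0$), with choice map $Q_k(y_k)=\arg\max_{x_k\in\mathcal{X}_k}\{\langle y_k,x_k\rangle-h_k(x_k)\}$; $Q=(Q_k)_k$. $p_k\preccurlyeq p_k'$ (weak domination) means $u_k(p_k;x_{-k})\le u_k(p_k';x_{-k})$ for all $x_{-k}\in\prod_{\ell\ne k}\mathcal{X}_\ell$,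 with strict inequality for some but not all $x_{-k}$. *)

theory Defs
  imports "HOL-Analysis.Analysis"
begin

definition finite_game :: "'n set \<Rightarrow> ('n \<Rightarrow> 'a set) \<Rightarrow> bool" where
  "finite_game N A \<longleftrightarrow> finite N \<and> (\<forall>k\<in>N. finite (A k) \<and> A k \<noteq> {})"

definition mixed :: "('n \<Rightarrow> 'a set) \<Rightarrow> 'n \<Rightarrow> ('a \<Rightarrow> real) set" where
  "mixed A k = {x. (\<forall>a. a \<notin> A k \<longrightarrow> x a = 0) \<and> (\<forall>a\<in>A k. 0 \<le> x a) \<and> sum x (A k) = 1}"

definition pure :: "'a \<Rightarrow> 'a \<Rightarrow> real" where
  "pure \<alpha> = (\<lambda>b. if b = \<alpha> then 1 else 0)"

definition exp_payoff ::
  "'n set \<Rightarrow> ('n \<Rightarrow> 'a set) \<Rightarrow> ('n \<Rightarrow> ('n \<Rightarrow> 'a) \<Rightarrow> real) \<Rightarrow> 'n \<Rightarrow> ('n \<Rightarrow> 'a \<Rightarrow> real) \<Rightarrow> real" where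
  "exp_payoff N A U k x = (\<Sum>\<alpha>\<in>PiE N A. (\<Prod>l\<in>N. x l (\<alpha> l)) * U k \<alpha>)"

definition payoff_vec ::
  "'n set \<Rightarrow> ('n \<Rightarrow> 'a set) \<Rightarrow> ('n \<Rightarrow> ('n \<Rightarrow> 'a) \<Rightarrow> real) \<Rightarrow> 'n \<Rightarrow> ('n \<Rightarrow> 'a \<Rightarrow> real) \<Rightarrow> 'a \<Rightarrow> real" where
  "payoff_vec N A U k x = (\<lambda>\<alpha>. exp_payoff N A U k (x(k := pure \<alpha>)))"

definition pairing :: "('n \<Rightarrow> 'a set) \<Rightarrow> 'n \<Rightarrow> ('a \<Rightarrow> real) \<Rightarrow> ('a \<Rightarrow> real) \<Rightarrow> real" where
  "pairing A k y x = (\<Sum>a\<in>A k. y a * x a)"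

definition choice ::
  "('n \<Rightarrow> 'a set) \<Rightarrow> ('n \<Rightarrow> ('a \<Rightarrow> real) \<Rightarrow> real) \<Rightarrow> 'n \<Rightarrow> ('a \<Rightarrow> real) \<Rightarrow> ('a \<Rightarrow> real)" where
  "choice A h k y = (THE x. x \<in> mixed A k \<and>
     (\<forall>x'\<in>mixed A k. pairing A k y x' - h k x' \<le> pairing A k y x - h k x))"

text \<open>Iterated directional derivatives (outermost direction first).\<close>
fun iter_dd :: "(('a \<Rightarrow> real) \<Rightarrow> real) \<Rightarrow> ('a \<Rightarrow> real) list \<Rightarrow> ('a \<Rightarrow> real) \<Rightarrow> real" where
  "iter_dd f [] = f"
| "iter_dd f (d # ds) = (\<lambda>z. deriv (\<lambda>s. iter_dd f ds (\<lambda>a. z a + s * d a)) 0)"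

definition smooth_along :: "('a \<Rightarrow> real) set \<Rightarrow> ('a \<Rightarrow> real) set \<Rightarrow> (('a \<Rightarrow> real) \<Rightarrow> real) \<Rightarrow> bool" where
  "smooth_along D V f \<longleftrightarrow>
     (\<forall>ds. set ds \<subseteq> V \<longrightarrow> continuous_on D (iter_dd f ds) \<and>
        (\<forall>d\<in>V. \<forall>z\<in>D. (\<lambda>s. iter_dd f ds (\<lambda>a. z a + s * d a)) differentiable (at 0)))"

definition face_relint :: "('n \<Rightarrow> 'a set) \<Rightarrow> 'n \<Rightarrow> 'a set \<Rightarrow> ('a \<Rightarrow> real) set" where
  "face_relint A k S = {x \<in> mixed A k. (\<forall>a\<in>S. 0 < x a) \<and> (\<forall>a. a \<notin> S \<longrightarrow> x a = 0)}"

definition face_dirs :: "'a set \<Rightarrow> ('a \<Rightarrow> real) set" where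
  "face_dirs S = {d. (\<forall>a. a \<notin> S \<longrightarrow> d a = 0) \<and> sum d S = 0}"

definition strongly_convex_mixed :: "('n \<Rightarrow> 'a set) \<Rightarrow> 'n \<Rightarrow> real \<Rightarrow> (('a \<Rightarrow> real) \<Rightarrow> real) \<Rightarrow> bool" where
  "strongly_convex_mixed A k K f \<longleftrightarrow>
     (\<forall>x1\<in>mixed A k. \<forall>x2\<in>mixed A k. \<forall>t\<in>{0..1}.
        f (\<lambda>a. t * x1 a + (1 - t) * x2 a)
          \<le> t * f x1 + (1 - t) * f x2 - 1/2 * K * t * (1 - t) * (\<Sum>a\<in>A k. (x1 a - x2 a)\<^sup>2))"

definition penalty :: "('n \<Rightarrow> 'a set) \<Rightarrow> 'n \<Rightarrow> (('a \<Rightarrow> real) \<Rightarrow> real) \<Rightarrow> bool" where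
  "penalty A k f \<longleftrightarrow> continuous_on (mixed A k) f
     \<and> (\<forall>S. S \<noteq> {} \<and> S \<subseteq> A k \<longrightarrow> smooth_along (face_relint A k S) (face_dirs S) f)
     \<and> (\<exists>K>0. strongly_convex_mixed A k K f)"

definition weakly_dominated ::
  "'n set \<Rightarrow> ('n \<Rightarrow> 'a set) \<Rightarrow> ('n \<Rightarrow> ('n \<Rightarrow> 'a) \<Rightarrow> real) \<Rightarrow> 'n \<Rightarrow> ('a \<Rightarrow> real) \<Rightarrow> ('a \<Rightarrow> real) \<Rightarrow> bool" where
  "weakly_dominated N A U k p p' \<longleftrightarrow>
     (\<forall>x. (\<forall>l\<in>N - {k}. x l \<in> mixed A l) \<longrightarrow>
        exp_payoff N A U k (x(k := p)) \<le> exp_payoff N A U k (x(k := p')))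
   \<and> (\<exists>x. (\<forall>l\<in>N - {k}. x l \<in> mixed A l) \<and>
        exp_payoff N A U k (x(k := p)) < exp_payoff N A U k (x(k := p')))
   \<and> (\<exists>x. (\<forall>l\<in>N - {k}. x l \<in> mixed A l) \<and>
        \<not> exp_payoff N A U k (x(k := p)) < exp_payoff N A U k (x(k := p')))"

end

theory Submission
  imports Defs
begin

text \<open>Let V = <y_k, p' - p> be the score gap of p' over p. By the dynamics its derivative
  is the sum over opponent profiles beta of w_beta(t) (u_k(p'; beta) - u_k(p; beta)), where
  w_beta(t) is the probability that the opponents play beta; by weak domination every term is
  nonnegative, so V is nondecreasing.

  If V is unbounded, p goes extinct: with m the smallest weight that x_k puts on the support
  of p, the strategy x_k + m (p' - p) is still mixed, so optimality of x_k = Q_k(y_k) bounds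
  m V by the oscillation of the penalty h_k, and m tends to 0.

  If V is bounded, each term w_beta (u_k(p'; beta) - u_k(p; beta)) is integrable on [0, oo).
  Strong convexity makes the choice map 1/2-Hoelder continuous and the scores move at bounded
  speed, so w_beta is uniformly continuous in time, and Barbalat's lemma gives w_beta -> 0
  whenever beta separates p from p'.\<close>

lemma mvt_nonneg_reals:
  fixes V D :: "real \<Rightarrow> real"
  assumes V': "\<And>t. t \<ge> 0 \<Longrightarrow> (V has_real_derivative D t) (at t within {0..})"
    and st: "0 \<le> s" "s \<le> t"
  shows "\<exists>\<xi>\<in>{s..t}. V t - V s = D \<xi> * (t - s)"
proof -
  have "(V has_derivative (*) (D \<xi>)) (at \<xi> within {s..t})" if "s \<le> \<xi>" "\<xi> \<le> t" for \<xi>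
  proof (rule has_derivative_subset)
    show "(V has_derivative (*) (D \<xi>)) (at \<xi> within {0..})"
      using V'[of \<xi>] st that by (simp add: has_field_derivative_imp_has_derivative)
  qed (use st in auto)
  then have "\<exists>\<xi>\<in>{s..t}. V t - V s = (*) (D \<xi>) (t - s)"
    by (rule mvt_very_simple[OF st(2)])
  then show ?thesis by simp
qed

lemma increasing_if_nonneg_derivative:
  fixes V D :: "real \<Rightarrow> real"
  assumes V': "\<And>t. t \<ge> 0 \<Longrightarrow> (V has_real_derivative D t) (at t within {0..})"
    and D: "\<And>t. t \<ge> 0 \<Longrightarrow> 0 \<le> D t" and st: "0 \<le> s" "s \<le> t"
  shows "V s \<le> V t"
proof -
  obtain \<xi> where "\<xi> \<in> {s..t}" "V t - V s = D \<xi> * (t - s)"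
    using mvt_nonneg_reals[OF V' st] by blast
  moreover have "0 \<le> D \<xi> * (t - s)"
    using D[of \<xi>] st \<open>\<xi> \<in> {s..t}\<close> by simp
  ultimately show ?thesis by linarith
qed

lemma filterlim_at_top_if_increasing_unbounded:
  fixes V :: "real \<Rightarrow> real"
  assumes mono: "\<And>s t. 0 \<le> s \<Longrightarrow> s \<le> t \<Longrightarrow> V s \<le> V t"
    and unbdd: "\<not> bdd_above (V ` {0..})"
  shows "filterlim V at_top at_top"
  unfolding filterlim_at_top
proof
  fix Z
  obtain t0 where t0: "t0 \<ge> 0" "Z < V t0"
    using unbdd by (meson atLeast_iff bdd_above.I2 linorder_not_le)
  show "\<forall>\<^sub>F t in at_top. Z \<le> V t"
    using eventually_ge_at_top[of t0] by eventually_elim (use t0 mono in force)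
qed

lemma eventually_increment_less_if_increasing_bounded:
  fixes V :: "real \<Rightarrow> real"
  assumes mono: "\<And>s t. 0 \<le> s \<Longrightarrow> s \<le> t \<Longrightarrow> V s \<le> V t"
    and bdd: "bdd_above (V ` {0..})" and \<eta>: "\<eta> > 0" and \<delta>: "\<delta> \<ge> 0"
  shows "\<forall>\<^sub>F t in at_top. V (t + \<delta>) - V t < \<eta>"
proof -
  have "Sup (V ` {0..}) - \<eta> < Sup (V ` {0..})"
    using \<eta> by simp
  then obtain t0 where t0: "t0 \<ge> 0" "Sup (V ` {0..}) - \<eta> < V t0"
    using less_cSupD[of "V ` {0..}"] by fastforce
  show ?thesis
    using eventually_ge_at_top[of t0]
  proof eventually_elim
    case (elim t)
    have "V (t + \<delta>) \<le> Sup (V ` {0..})"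
      using bdd t0 elim \<delta> by (intro cSup_upper) auto
    moreover have "V t0 \<le> V t"
      using mono t0 elim by blast
    ultimately show ?case
      using t0 by linarith
  qed
qed

lemma tendsto_zero_if_mult_bounded:
  fixes m V :: "real \<Rightarrow> real"
  assumes V: "filterlim V at_top at_top"
    and bound: "\<forall>\<^sub>F t in at_top. 0 \<le> m t \<and> m t * V t \<le> C"
  shows "(m \<longlongrightarrow> 0) at_top"
proof (rule tendsto_sandwich[OF _ _ tendsto_const])
  have "\<forall>\<^sub>F t in at_top. 0 < V t"
    using V by (simp add: filterlim_at_top_dense)
  with bound show "\<forall>\<^sub>F t in at_top. 0 \<le> m t" "\<forall>\<^sub>F t in at_top. m t \<le> C / V t"
    by (eventually_elim; simp add: pos_le_divide_eq)+
  show "((\<lambda>t. C / V t) \<longlongrightarrow> 0) at_top"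
    by (rule tendsto_divide_0[OF tendsto_const filterlim_at_top_imp_at_infinity[OF V]])
qed

text \<open>Barbalat's lemma: V increases by at least c f over any interval on which f is
  large, and uniform continuity keeps f large on intervals of a fixed length.\<close>
lemma barbalat_tendsto_zero:
  fixes V D f :: "real \<Rightarrow> real"
  assumes V': "\<And>t. t \<ge> 0 \<Longrightarrow> (V has_real_derivative D t) (at t within {0..})"
    and bdd: "bdd_above (V ` {0..})"
    and c: "c > 0"
    and f_nonneg: "\<And>t. t \<ge> 0 \<Longrightarrow> 0 \<le> f t"
    and f_le: "\<And>t. t \<ge> 0 \<Longrightarrow> c * f t \<le> D t"
    and uc: "uniformly_continuous_on {0..} f"
  shows "(f \<longlongrightarrow> 0) at_top"
proof -
  have mono: "V s \<le> V t" if "0 \<le> s" "s \<le> t" for s t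
  proof (rule increasing_if_nonneg_derivative[OF V' _ that])
    fix t :: real assume "t \<ge> 0"
    then show "0 \<le> D t"
      using c f_nonneg[of t] f_le[of t] by (smt (verit) mult_nonneg_nonneg)
  qed
  have increment: "\<forall>\<^sub>F t in at_top. V (t + \<delta>) - V t < \<eta>" if "\<eta> > 0" "\<delta> \<ge> 0" for \<eta> \<delta>
    using eventually_increment_less_if_increasing_bounded[OF mono bdd that] .
  show ?thesis
    unfolding tendsto_iff
  proof (intro allI impI)
    fix \<epsilon> :: real assume \<epsilon>: "\<epsilon> > 0"
    then obtain \<delta> where \<delta>: "\<delta> > 0"
      and close: "\<And>s t. s \<ge> 0 \<Longrightarrow> t \<ge> 0 \<Longrightarrow> dist s t < \<delta> \<Longrightarrow> dist (f s) (f t) < \<epsilon>/2"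
      using uc unfolding uniformly_continuous_on_def by (metis atLeast_iff half_gt_zero)
    have "\<forall>\<^sub>F t in at_top. V (t + \<delta>/2) - V t < c * (\<epsilon>/2) * (\<delta>/2) \<and> t \<ge> 0"
      using increment[of "c * (\<epsilon>/2) * (\<delta>/2)" "\<delta>/2"] c \<epsilon> \<delta> eventually_ge_at_top[of 0]
      by (auto intro: eventually_conj)
    then show "\<forall>\<^sub>F t in at_top. dist (f t) 0 < \<epsilon>"
    proof eventually_elim
      case (elim t)
      obtain \<xi> where \<xi>: "\<xi> \<in> {t..t + \<delta>/2}" "V (t + \<delta>/2) - V t = D \<xi> * (\<delta>/2)"
        using mvt_nonneg_reals[OF V', of t "t + \<delta>/2"] elim \<delta> by auto
      have "dist (f \<xi>) (f t) < \<epsilon>/2"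
        using close[of \<xi> t] \<xi>(1) elim \<delta> by (simp add: dist_real_def)
      then have "f t - \<epsilon>/2 < f \<xi>"
        unfolding dist_real_def by arith
      then have "c * (f t - \<epsilon>/2) * (\<delta>/2) \<le> c * f \<xi> * (\<delta>/2)"
        using c \<delta> by (intro mult_right_mono mult_left_mono) auto
      also have "\<dots> \<le> D \<xi> * (\<delta>/2)"
        using f_le[of \<xi>] \<xi>(1) elim \<delta> by (intro mult_right_mono) auto
      finally have "c * (f t - \<epsilon>/2) * (\<delta>/2) < c * (\<epsilon>/2) * (\<delta>/2)"
        using \<xi>(2) elim by linarith
      then have "f t < \<epsilon>"
        using c \<delta> by (simp add: mult_less_cancel_right mult_less_cancel_left)
      then show ?case
        using f_nonneg[of t] elim by (simp add: dist_real_def)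
    qed
  qed
qed

lemma uniformly_continuous_on_if_sq_dist_le:
  fixes f :: "real \<Rightarrow> real"
  assumes "\<And>s t. s \<in> S \<Longrightarrow> t \<in> S \<Longrightarrow> (f s - f t)\<^sup>2 \<le> L * \<bar>s - t\<bar>"
  shows "uniformly_continuous_on S f"
  unfolding uniformly_continuous_on_def
proof (intro allI impI)
  fix \<epsilon> :: real assume \<epsilon>: "\<epsilon> > 0"
  show "\<exists>\<delta>>0. \<forall>t\<in>S. \<forall>s\<in>S. dist s t < \<delta> \<longrightarrow> dist (f s) (f t) < \<epsilon>"
  proof (intro exI[of _ "\<epsilon>\<^sup>2 / (\<bar>L\<bar> + 1)"] conjI ballI impI)
    show "0 < \<epsilon>\<^sup>2 / (\<bar>L\<bar> + 1)" using \<epsilon> by simp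
    fix t s assume ts: "t \<in> S" "s \<in> S" "dist s t < \<epsilon>\<^sup>2 / (\<bar>L\<bar> + 1)"
    have "(f s - f t)\<^sup>2 \<le> (\<bar>L\<bar> + 1) * \<bar>s - t\<bar>"
      using assms[OF ts(2,1)] by (smt (verit) abs_ge_zero mult_right_mono)
    also have "\<dots> < \<epsilon>\<^sup>2"
      using ts(3) by (simp add: dist_real_def field_simps)
    finally show "dist (f s) (f t) < \<epsilon>"
      using \<epsilon> by (simp add: dist_real_def power2_less_imp_less)
  qed
qed

lemma uniformly_continuous_on_prod_abs_le_1:
  fixes f :: "'i \<Rightarrow> 'a::metric_space \<Rightarrow> real"
  assumes I: "finite I"
    and uc: "\<And>i. i \<in> I \<Longrightarrow> uniformly_continuous_on S (f i)"
    and bound: "\<And>i s. i \<in> I \<Longrightarrow> s \<in> S \<Longrightarrow> \<bar>f i s\<bar> \<le> 1"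
  shows "uniformly_continuous_on S (\<lambda>s. \<Prod>i\<in>I. f i s)"
  unfolding uniformly_continuous_on_def
proof (intro allI impI)
  fix \<epsilon> :: real assume \<epsilon>: "\<epsilon> > 0"
  define \<eta> where "\<eta> = \<epsilon> / (card I + 1)"
  have \<eta>: "\<eta> > 0" using \<epsilon> by (simp add: \<eta>_def)
  have "\<forall>i\<in>I. \<exists>d>0. \<forall>t\<in>S. \<forall>s\<in>S. dist s t < d \<longrightarrow> dist (f i s) (f i t) < \<eta>"
    using uc \<eta> unfolding uniformly_continuous_on_def by blast
  then obtain d where d: "\<And>i. i \<in> I \<Longrightarrow> d i > 0"
    and close: "\<And>i s t. i \<in> I \<Longrightarrow> t \<in> S \<Longrightarrow> s \<in> S \<Longrightarrow> dist s t < d i \<Longrightarrow> dist (f i s) (f i t) < \<eta>"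
    by metis
  show "\<exists>\<delta>>0. \<forall>t\<in>S. \<forall>s\<in>S. dist s t < \<delta> \<longrightarrow> dist (\<Prod>i\<in>I. f i s) (\<Prod>i\<in>I. f i t) < \<epsilon>"
  proof (intro exI[of _ "Min (insert 1 (d ` I))"] conjI ballI impI)
    show "0 < Min (insert 1 (d ` I))" using I d by simp
    fix t s assume ts: "t \<in> S" "s \<in> S" "dist s t < Min (insert 1 (d ` I))"
    have "\<bar>(\<Prod>i\<in>I. f i s) - (\<Prod>i\<in>I. f i t)\<bar> \<le> (\<Sum>i\<in>I. \<bar>f i s - f i t\<bar>)"
      using norm_prod_diff[of I "\<lambda>i. f i s" "\<lambda>i. f i t"] bound ts by auto
    also have "\<dots> \<le> card I * \<eta>"
      using close ts I by (intro sum_bounded_above) (auto simp: dist_real_def less_imp_le)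
    also have "\<dots> < \<epsilon>"
      using \<epsilon> by (simp add: \<eta>_def field_simps)
    finally show "dist (\<Prod>i\<in>I. f i s) (\<Prod>i\<in>I. f i t) < \<epsilon>"
      by (simp add: dist_real_def)
  qed
qed

lemma mixed_nonneg: "x \<in> mixed A k \<Longrightarrow> 0 \<le> x a"
  by (cases "a \<in> A k") (auto simp: mixed_def)

lemma mixed_le_one:
  assumes "finite (A k)" "x \<in> mixed A k"
  shows "x a \<le> 1"
proof (cases "a \<in> A k")
  case True
  have "x a \<le> sum x (A k)"
    by (rule member_le_sum) (use assms True in \<open>auto simp: mixed_def\<close>)
  then show ?thesis using assms by (simp add: mixed_def)
qed (use assms in \<open>auto simp: mixed_def\<close>)

lemma pure_mixed: "finite (A k) \<Longrightarrow> a \<in> A k \<Longrightarrow> pure a \<in> mixed A k"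
  by (auto simp: mixed_def pure_def)

lemma compact_mixed:
  assumes "finite (A k)"
  shows "compact (mixed A k)"
proof -
  define S where "S a = (if a \<in> A k then {0..1::real} else {0})" for a
  have "compactin (product_topology (\<lambda>_. euclidean) UNIV) (PiE UNIV S)"
    unfolding compactin_PiE by (auto simp: S_def)
  then have box: "compact (PiE UNIV S)"
    by (simp add: euclidean_product_topology)
  have simplex: "closed {x::'a \<Rightarrow> real. sum x (A k) = 1}"
    by (intro closed_Collect_eq continuous_on_sum continuous_on_const
        continuous_on_subset[OF continuous_on_product_coordinates]) auto
  have "mixed A k = PiE UNIV S \<inter> {x. sum x (A k) = 1}"
    using mixed_le_one[of A k, OF assms] by (auto simp: mixed_def S_def PiE_iff split: if_splits)
  then show ?thesis using box simplex by (simp add: compact_Int_closed)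
qed

definition regularized_argmax ::
  "('n \<Rightarrow> 'a set) \<Rightarrow> 'n \<Rightarrow> (('a \<Rightarrow> real) \<Rightarrow> real) \<Rightarrow> ('a \<Rightarrow> real) \<Rightarrow> ('a \<Rightarrow> real) \<Rightarrow> bool" where
  "regularized_argmax A k f y x \<longleftrightarrow> x \<in> mixed A k \<and>
     (\<forall>x'\<in>mixed A k. pairing A k y x' - f x' \<le> pairing A k y x - f x)"

text \<open>Compare the maximizer x with the midpoint of x and z.\<close>
lemma regularized_argmax_quadratic_gap:
  assumes sc: "strongly_convex_mixed A k K f"
    and x: "regularized_argmax A k f y x" and z: "z \<in> mixed A k"
  shows "K/4 * (\<Sum>a\<in>A k. (z a - x a)\<^sup>2) \<le> (pairing A k y x - f x) - (pairing A k y z - f z)"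
proof -
  define w where "w a = 1/2 * z a + (1 - 1/2) * x a" for a
  have xm: "x \<in> mixed A k" using x by (simp add: regularized_argmax_def)
  have w: "w \<in> mixed A k"
    using z xm by (auto simp: w_def mixed_def sum.distrib sum_divide_distrib[symmetric])
  have "(1/2::real) \<in> {0..1}" by simp
  with sc z xm have "f w \<le> 1/2 * f z + (1 - 1/2) * f x - 1/2 * K * (1/2) * (1 - 1/2) * (\<Sum>a\<in>A k. (z a - x a)\<^sup>2)"
    unfolding strongly_convex_mixed_def w_def by blast
  moreover have "pairing A k y w - f w \<le> pairing A k y x - f x"
    using x w by (simp add: regularized_argmax_def)
  moreover have "pairing A k y w = 1/2 * pairing A k y z + 1/2 * pairing A k y x"
    by (simp add: w_def pairing_def sum_distrib_left sum.distrib algebra_simps)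
  ultimately show ?thesis by (simp add: algebra_simps)
qed

lemma regularized_argmax_unique:
  assumes sc: "strongly_convex_mixed A k K f" and K: "K > 0" and fin: "finite (A k)"
    and x1: "regularized_argmax A k f y x1" and x2: "regularized_argmax A k f y x2"
  shows "x1 = x2"
proof -
  have "K/4 * (\<Sum>a\<in>A k. (x2 a - x1 a)\<^sup>2) \<le> 0"
    using regularized_argmax_quadratic_gap[OF sc x1] x1 x2 by (force simp: regularized_argmax_def)
  with K have "(\<Sum>a\<in>A k. (x2 a - x1 a)\<^sup>2) \<le> 0"
    by (simp add: mult_le_0_iff)
  then have "(\<Sum>a\<in>A k. (x2 a - x1 a)\<^sup>2) = 0"
    by (simp add: antisym sum_nonneg)
  then have "\<forall>a\<in>A k. x1 a = x2 a"
    using fin by (simp add: sum_nonneg_eq_0_iff)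
  moreover have "x1 a = 0" "x2 a = 0" if "a \<notin> A k" for a
    using x1 x2 that by (simp_all add: regularized_argmax_def mixed_def)
  ultimately show ?thesis
    by (metis ext)
qed

lemma regularized_argmax_choice:
  assumes fin: "finite (A k)" "A k \<noteq> {}" and pen: "penalty A k (h k)"
  shows "regularized_argmax A k (h k) y (choice A h k y)"
proof -
  obtain K where K: "K > 0" "strongly_convex_mixed A k K (h k)"
    using pen unfolding penalty_def by blast
  have "continuous_on (mixed A k) (\<lambda>x. pairing A k y x - h k x)"
    using pen unfolding pairing_def penalty_def
    by (intro continuous_on_diff continuous_on_sum continuous_on_mult continuous_on_const
        continuous_on_subset[OF continuous_on_product_coordinates]) auto
  moreover have "mixed A k \<noteq> {}"
    using pure_mixed[of A k, OF fin(1)] fin(2) by blast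
  ultimately obtain x where x: "regularized_argmax A k (h k) y x"
    using continuous_attains_sup[OF compact_mixed[of A k, OF fin(1)]]
    unfolding regularized_argmax_def by blast
  have "regularized_argmax A k (h k) y (THE x. regularized_argmax A k (h k) y x)"
    by (rule theI[of "regularized_argmax A k (h k) y", OF x])
      (use regularized_argmax_unique[OF K(2) K(1) fin(1) _ x] in blast)
  then show ?thesis
    unfolding choice_def regularized_argmax_def[symmetric] .
qed

lemma regularized_argmax_holder:
  assumes sc: "strongly_convex_mixed A k K f" and K: "K > 0" and fin: "finite (A k)"
    and x: "regularized_argmax A k f y x" and x': "regularized_argmax A k f y' x'"
    and d: "\<forall>a\<in>A k. \<bar>y a - y' a\<bar> \<le> d" and a: "a \<in> A k"
  shows "(x a - x' a)\<^sup>2 \<le> 4 * d / K"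
proof -
  let ?S = "\<Sum>a\<in>A k. (x a - x' a)\<^sup>2"
  have xm: "x \<in> mixed A k" and x'm: "x' \<in> mixed A k"
    using x x' by (simp_all add: regularized_argmax_def)
  have "K/4 * ?S \<le> (pairing A k y x - f x) - (pairing A k y x' - f x')"
    using regularized_argmax_quadratic_gap[OF sc x x'm] by (simp add: power2_commute)
  moreover have "K/4 * ?S \<le> (pairing A k y' x' - f x') - (pairing A k y' x - f x)"
    using regularized_argmax_quadratic_gap[OF sc x' xm] .
  moreover have "pairing A k y x - pairing A k y x' + pairing A k y' x' - pairing A k y' x
      = (\<Sum>a\<in>A k. (y a - y' a) * (x a - x' a))"
    by (simp add: pairing_def sum_subtractf[symmetric] sum.distrib[symmetric] algebra_simps)
  ultimately have "K/2 * ?S \<le> (\<Sum>a\<in>A k. (y a - y' a) * (x a - x' a))"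
    by linarith
  also have "\<dots> \<le> (\<Sum>a\<in>A k. d * (x a + x' a))"
  proof (rule sum_mono)
    fix b assume b: "b \<in> A k"
    have "(y b - y' b) * (x b - x' b) \<le> \<bar>y b - y' b\<bar> * \<bar>x b - x' b\<bar>"
      by (metis abs_ge_self abs_mult)
    also have "\<dots> \<le> d * (x b + x' b)"
      using d b mixed_nonneg[OF xm, of b] mixed_nonneg[OF x'm, of b]
      by (intro mult_mono) auto
    finally show "(y b - y' b) * (x b - x' b) \<le> d * (x b + x' b)" .
  qed
  also have "\<dots> = 2 * d"
    using xm x'm by (simp add: mixed_def sum.distrib sum_distrib_left[symmetric])
  finally have "?S \<le> 4 * d / K"
    using K by (simp add: field_simps)
  moreover have "(x a - x' a)\<^sup>2 \<le> ?S"
    by (rule member_le_sum) (use a fin in auto)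
  ultimately show ?thesis by linarith
qed

text \<open>Moving the mass \<mu> q, which x can afford, over to \<mu> q' stays feasible,
  so the pairing gain of that move is paid for by the penalty.\<close>
lemma regularized_argmax_shift_bound:
  assumes x: "regularized_argmax A k f y x"
    and q: "q \<in> mixed A k" and q': "q' \<in> mixed A k"
    and \<mu>: "0 \<le> \<mu>" "\<And>a. a \<in> A k \<Longrightarrow> \<mu> * q a \<le> x a"
    and C: "\<And>z. z \<in> mixed A k \<Longrightarrow> \<bar>f z\<bar> \<le> C"
  shows "\<mu> * pairing A k y (\<lambda>a. q' a - q a) \<le> 2 * C"
proof -
  define z where "z a = x a + \<mu> * (q' a - q a)" for a
  have xm: "x \<in> mixed A k" using x by (simp add: regularized_argmax_def)
  have "0 \<le> z a" if "a \<in> A k" for a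
    using \<mu> that mixed_nonneg[OF q', of a] by (simp add: z_def algebra_simps add_increasing2)
  then have zm: "z \<in> mixed A k"
    using xm q q' by (auto simp: z_def mixed_def sum.distrib sum_subtractf sum_distrib_left[symmetric])
  have "pairing A k y z = pairing A k y x + \<mu> * pairing A k y (\<lambda>a. q' a - q a)"
    by (simp add: pairing_def z_def distrib_left sum.distrib sum_distrib_left mult_ac)
  moreover have "pairing A k y z - f z \<le> pairing A k y x - f x"
    using x zm by (simp add: regularized_argmax_def)
  ultimately show ?thesis
    using C[OF zm] C[OF xm] by linarith
qed

lemma exp_payoff_fun_upd:
  assumes k: "k \<in> N" and finN: "finite N"
  shows "exp_payoff N A U k (z(k := q)) =
    (\<Sum>\<beta>\<in>PiE (N - {k}) A. (\<Prod>l\<in>N - {k}. z l (\<beta> l)) * (\<Sum>a\<in>A k. q a * U k (\<beta>(k := a))))"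
proof -
  have PiE_split: "PiE N A = (\<lambda>(a, \<beta>). \<beta>(k := a)) ` (A k \<times> PiE (N - {k}) A)"
    using PiE_insert_eq[of k "N - {k}" A] k by (simp add: insert_absorb)
  have inj: "inj_on (\<lambda>(a, \<beta>). \<beta>(k := a)) (A k \<times> PiE (N - {k}) A)"
    by (rule inj_combinator) simp
  have weight: "(\<Prod>l\<in>N. (z(k := q)) l ((\<beta>(k := a)) l)) = q a * (\<Prod>l\<in>N - {k}. z l (\<beta> l))" for \<beta> a
  proof -
    have "(\<Prod>l\<in>N - {k}. (z(k := q)) l ((\<beta>(k := a)) l)) = (\<Prod>l\<in>N - {k}. z l (\<beta> l))"
      by (rule prod.cong) auto
    then show ?thesis
      using k finN by (simp add: prod.remove del: fun_upd_apply) simp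
  qed
  have "exp_payoff N A U k (z(k := q))
      = (\<Sum>(a, \<beta>)\<in>A k \<times> PiE (N - {k}) A. q a * (\<Prod>l\<in>N - {k}. z l (\<beta> l)) * U k (\<beta>(k := a)))"
    unfolding exp_payoff_def PiE_split sum.reindex[OF inj]
    by (simp add: case_prod_beta weight del: fun_upd_apply)
  also have "\<dots> = (\<Sum>\<beta>\<in>PiE (N - {k}) A. \<Sum>a\<in>A k. q a * (\<Prod>l\<in>N - {k}. z l (\<beta> l)) * U k (\<beta>(k := a)))"
    by (simp add: sum.cartesian_product[symmetric] sum.swap[of _ "A k"])
  finally show ?thesis
    by (simp add: sum_distrib_left mult_ac)
qed

lemma prod_pure_PiE:
  assumes "\<beta> \<in> PiE S A" "\<beta>' \<in> PiE S A" "finite S"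
  shows "(\<Prod>l\<in>S. pure (\<beta> l) (\<beta>' l)) = of_bool (\<beta>' = \<beta>)"
proof (cases "\<beta>' = \<beta>")
  case False
  then obtain l where "l \<in> S" "\<beta>' l \<noteq> \<beta> l"
    using assms by (metis PiE_ext)
  then show ?thesis
    using assms(3) False by (auto simp: pure_def prod_zero_iff)
qed (simp add: pure_def)

lemma exp_payoff_pure_profile:
  assumes game: "finite_game N A" and k: "k \<in> N" and \<beta>: "\<beta> \<in> PiE (N - {k}) A"
  shows "exp_payoff N A U k ((\<lambda>l. pure (\<beta> l))(k := q)) = (\<Sum>a\<in>A k. q a * U k (\<beta>(k := a)))"
proof -
  have fin: "finite N" "finite (PiE (N - {k}) A)"
    using game by (auto simp: finite_game_def intro!: finite_PiE)
  show ?thesis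
    unfolding exp_payoff_fun_upd[OF k fin(1)]
    using fin \<beta> by (simp add: prod_pure_PiE cong: sum.cong)
qed

lemma payoff_vec_eq:
  assumes k: "k \<in> N" and finN: "finite N" and a: "a \<in> A k" and finA: "finite (A k)"
  shows "payoff_vec N A U k z a = (\<Sum>\<beta>\<in>PiE (N - {k}) A. (\<Prod>l\<in>N - {k}. z l (\<beta> l)) * U k (\<beta>(k := a)))"
proof -
  have "(\<Sum>b\<in>A k. pure a b * U k (\<beta>(k := b))) = U k (\<beta>(k := a))" for \<beta>
    using a finA by (simp add: pure_def of_bool_def[symmetric] eq_commute[of _ a])
  then show ?thesis
    by (simp add: payoff_vec_def exp_payoff_fun_upd[OF k finN])
qed

lemma exp_payoff_abs_le:
  assumes game: "finite_game N A" and z: "\<And>l. l \<in> N \<Longrightarrow> z l \<in> mixed A l"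
  shows "\<bar>exp_payoff N A U k z\<bar> \<le> (\<Sum>\<gamma>\<in>PiE N A. \<bar>U k \<gamma>\<bar>)"
proof -
  have "\<bar>z l (\<gamma> l)\<bar> \<le> 1" if "l \<in> N" for l \<gamma>
  proof -
    have "finite (A l)"
      using game that unfolding finite_game_def by blast
    then show ?thesis
      using mixed_nonneg[OF z[OF that]] mixed_le_one[OF _ z[OF that]] by (simp add: abs_le_iff)
  qed
  then have "\<bar>\<Prod>l\<in>N. z l (\<gamma> l)\<bar> \<le> 1" for \<gamma>
    unfolding abs_prod by (intro prod_le_1) auto
  then have "\<bar>(\<Prod>l\<in>N. z l (\<gamma> l)) * U k \<gamma>\<bar> \<le> \<bar>U k \<gamma>\<bar>" for \<gamma>
    by (simp add: abs_mult mult_left_le_one_le)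
  then show ?thesis
    unfolding exp_payoff_def by (rule order_trans[OF sum_abs sum_mono])
qed

lemma score_gap_has_derivative:
  assumes game: "finite_game N A" and k: "k \<in> N"
    and ode: "\<And>a. a \<in> A k \<Longrightarrow> ((\<lambda>s. y s k a) has_real_derivative payoff_vec N A U k (x t) a) (at t within {0..})"
  shows "((\<lambda>s. pairing A k (y s k) (\<lambda>a. p' a - p a)) has_real_derivative
      (\<Sum>\<beta>\<in>PiE (N - {k}) A. (\<Prod>l\<in>N - {k}. x t l (\<beta> l)) *
         (exp_payoff N A U k ((\<lambda>l. pure (\<beta> l))(k := p')) - exp_payoff N A U k ((\<lambda>l. pure (\<beta> l))(k := p)))))
    (at t within {0..})"
proof -
  have fin: "finite N" "finite (A k)"
    using game k by (auto simp: finite_game_def)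
  have "((\<lambda>s. pairing A k (y s k) (\<lambda>a. p' a - p a)) has_real_derivative
      (\<Sum>a\<in>A k. payoff_vec N A U k (x t) a * (p' a - p a))) (at t within {0..})"
    unfolding pairing_def by (intro DERIV_sum DERIV_cmult_right ode)
  also have "(\<Sum>a\<in>A k. payoff_vec N A U k (x t) a * (p' a - p a))
    = (\<Sum>\<beta>\<in>PiE (N - {k}) A. (\<Prod>l\<in>N - {k}. x t l (\<beta> l)) * (\<Sum>a\<in>A k. (p' a - p a) * U k (\<beta>(k := a))))"
    using k fin
    by (simp add: payoff_vec_eq sum_distrib_left sum_distrib_right sum.swap[of _ "A k"] mult_ac
        cong: sum.cong)
  also have "\<dots> = (\<Sum>\<beta>\<in>PiE (N - {k}) A. (\<Prod>l\<in>N - {k}. x t l (\<beta> l)) *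
      (exp_payoff N A U k ((\<lambda>l. pure (\<beta> l))(k := p')) - exp_payoff N A U k ((\<lambda>l. pure (\<beta> l))(k := p))))"
    using game k
    by (intro sum.cong refl) (simp add: exp_payoff_pure_profile sum_subtractf[symmetric] left_diff_distrib)
  finally show ?thesis .
qed

lemma regularized_trajectory_uniformly_continuous:
  fixes y x y' :: "real \<Rightarrow> 'a \<Rightarrow> real"
  assumes fin: "finite (A k)" and sc: "strongly_convex_mixed A k K f" and K: "K > 0"
    and br: "\<And>t. t \<ge> 0 \<Longrightarrow> regularized_argmax A k f (y t) (x t)"
    and y': "\<And>t a. t \<ge> 0 \<Longrightarrow> a \<in> A k \<Longrightarrow> ((\<lambda>s. y s a) has_real_derivative y' t a) (at t within {0..})"
    and speed: "\<And>t a. t \<ge> 0 \<Longrightarrow> a \<in> A k \<Longrightarrow> \<bar>y' t a\<bar> \<le> M"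
  shows "uniformly_continuous_on {0..} (\<lambda>t. x t a)"
proof (rule uniformly_continuous_on_if_sq_dist_le[where L = "4 * \<bar>M\<bar> / K"])
  fix s t :: real assume st: "s \<in> {0..}" "t \<in> {0..}"
  have lipschitz: "\<forall>b\<in>A k. \<bar>y s b - y t b\<bar> \<le> \<bar>M\<bar> * \<bar>s - t\<bar>"
  proof
    fix b assume b: "b \<in> A k"
    have "norm (y s b - y t b) \<le> M * norm (s - t)"
    proof (rule field_differentiable_bound[of "{0..}" "\<lambda>s. y s b" "\<lambda>t. y' t b"])
      fix z :: real assume "z \<in> {0..}"
      then show "((\<lambda>s. y s b) has_field_derivative y' z b) (at z within {0..})"
        and "norm (y' z b) \<le> M"
        using y' speed b by auto
    qed (use st in \<open>auto simp: convex_real_interval\<close>)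
    also have "\<dots> \<le> \<bar>M\<bar> * \<bar>s - t\<bar>"
      by (simp add: mult_right_mono)
    finally show "\<bar>y s b - y t b\<bar> \<le> \<bar>M\<bar> * \<bar>s - t\<bar>" by simp
  qed
  have brs: "regularized_argmax A k f (y s) (x s)" and brt: "regularized_argmax A k f (y t) (x t)"
    using br st by auto
  show "(x s a - x t a)\<^sup>2 \<le> 4 * \<bar>M\<bar> / K * \<bar>s - t\<bar>"
  proof (cases "a \<in> A k")
    case True
    then show ?thesis
      using regularized_argmax_holder[OF sc K fin brs brt lipschitz] by (simp add: mult.assoc)
  next
    case False
    with brs brt have "x s a = 0" "x t a = 0"
      by (simp_all add: regularized_argmax_def mixed_def)
    then show ?thesis using K by simp
  qed
qed

lemma support_min_tendsto_zero_if_score_gap_unbounded: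
  fixes y x :: "real \<Rightarrow> 'a \<Rightarrow> real"
  assumes fin: "finite (A k)" and cont: "continuous_on (mixed A k) f"
    and br: "\<And>t. t \<ge> 0 \<Longrightarrow> regularized_argmax A k f (y t) (x t)"
    and p: "p \<in> mixed A k" and p': "p' \<in> mixed A k"
    and gap: "filterlim (\<lambda>t. pairing A k (y t) (\<lambda>a. p' a - p a)) at_top at_top"
  shows "((\<lambda>t. Min {x t \<alpha> | \<alpha>. \<alpha> \<in> A k \<and> p \<alpha> \<noteq> 0}) \<longlongrightarrow> 0) at_top"
proof -
  obtain C where C: "\<And>z. z \<in> mixed A k \<Longrightarrow> \<bar>f z\<bar> \<le> C"
    using compact_imp_bounded[OF compact_continuous_image[OF cont compact_mixed[of A k, OF fin]]]
    unfolding bounded_real by blast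
  define S where "S = {\<alpha> \<in> A k. p \<alpha> \<noteq> 0}"
  have "sum p (A k) \<noteq> 0"
    using p by (simp add: mixed_def)
  then obtain \<alpha> where "\<alpha> \<in> A k" "p \<alpha> \<noteq> 0"
    by (meson sum.neutral)
  then have S: "finite S" "S \<noteq> {}"
    using fin by (auto simp: S_def)
  define m where "m t = Min {x t \<alpha> | \<alpha>. \<alpha> \<in> A k \<and> p \<alpha> \<noteq> 0}" for t
  have m_eq: "m t = Min ((\<lambda>\<alpha>. x t \<alpha>) ` S)" for t
    unfolding m_def S_def by (rule arg_cong[where f = Min]) auto
  have bound: "0 \<le> m t \<and> m t * pairing A k (y t) (\<lambda>a. p' a - p a) \<le> 2 * C" if t: "t \<ge> 0" for t
  proof
    have xm: "x t \<in> mixed A k" using br[OF t] by (simp add: regularized_argmax_def)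
    show m_nonneg: "0 \<le> m t"
      unfolding m_eq using S mixed_nonneg[OF xm] by simp
    have "m t * p a \<le> x t a" if "a \<in> A k" for a
    proof (cases "p a = 0")
      case False
      then have "m t \<le> x t a" using S that by (auto simp: m_eq S_def)
      moreover have "m t * p a \<le> m t"
        using m_nonneg mixed_le_one[of A k, OF fin p] by (simp add: mult_left_le)
      ultimately show ?thesis by linarith
    qed (use mixed_nonneg[OF xm] in simp)
    then show "m t * pairing A k (y t) (\<lambda>a. p' a - p a) \<le> 2 * C"
      by (rule regularized_argmax_shift_bound[OF br[OF t] p p' m_nonneg _ C])
  qed
  have "\<forall>\<^sub>F t in at_top. 0 \<le> m t \<and> m t * pairing A k (y t) (\<lambda>a. p' a - p a) \<le> 2 * C"
    using eventually_ge_at_top[of 0] by eventually_elim (rule bound)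
  then show ?thesis
    unfolding m_def[symmetric] by (rule tendsto_zero_if_mult_bounded[OF gap])
qed

lemma choice_dynamics_coordinate_uniformly_continuous:
  fixes y x :: "real \<Rightarrow> 'n \<Rightarrow> 'a \<Rightarrow> real"
  assumes game: "finite_game N A" and l: "l \<in> N" and pen: "penalty A l (h l)"
    and br: "\<And>t l. t \<ge> 0 \<Longrightarrow> l \<in> N \<Longrightarrow> regularized_argmax A l (h l) (y t l) (x t l)"
    and ode: "\<forall>t\<ge>0. \<forall>l\<in>N. \<forall>\<alpha>\<in>A l.
               ((\<lambda>s. y s l \<alpha>) has_real_derivative payoff_vec N A U l (x t) \<alpha>) (at t within {0..})"
  shows "uniformly_continuous_on {0..} (\<lambda>t. x t l a)"
proof -
  obtain K where K: "K > 0" "strongly_convex_mixed A l K (h l)"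
    using pen unfolding penalty_def by blast
  have finA: "finite (A l)"
    using game l unfolding finite_game_def by blast
  have "\<bar>payoff_vec N A U l (x t) b\<bar> \<le> (\<Sum>\<gamma>\<in>PiE N A. \<bar>U l \<gamma>\<bar>)" if "t \<ge> 0" "b \<in> A l" for t b
    unfolding payoff_vec_def
  proof (rule exp_payoff_abs_le[OF game])
    fix j assume "j \<in> N"
    then show "((x t)(l := pure b)) j \<in> mixed A j"
      using br[OF \<open>t \<ge> 0\<close>] pure_mixed[of A l, OF finA \<open>b \<in> A l\<close>]
      by (simp add: regularized_argmax_def)
  qed
  then show ?thesis
    using br l ode
    by (intro regularized_trajectory_uniformly_continuous[OF finA K(2) K(1),
          where y = "\<lambda>t. y t l" and y' = "\<lambda>t. payoff_vec N A U l (x t)"]) auto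
qed

lemma choice_dynamics_weight_uniformly_continuous:
  fixes y x :: "real \<Rightarrow> 'n \<Rightarrow> 'a \<Rightarrow> real"
  assumes game: "finite_game N A" and L: "L \<subseteq> N" and pen: "\<forall>l\<in>N. penalty A l (h l)"
    and br: "\<And>t l. t \<ge> 0 \<Longrightarrow> l \<in> N \<Longrightarrow> regularized_argmax A l (h l) (y t l) (x t l)"
    and ode: "\<forall>t\<ge>0. \<forall>l\<in>N. \<forall>\<alpha>\<in>A l.
               ((\<lambda>s. y s l \<alpha>) has_real_derivative payoff_vec N A U l (x t) \<alpha>) (at t within {0..})"
  shows "uniformly_continuous_on {0..} (\<lambda>t. \<Prod>l\<in>L. x t l (\<beta> l))"
proof (rule uniformly_continuous_on_prod_abs_le_1)
  show "finite L"
    using game L unfolding finite_game_def by (blast intro: finite_subset)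
  fix l assume l: "l \<in> L"
  then show "uniformly_continuous_on {0..} (\<lambda>t. x t l (\<beta> l))"
    using L pen by (intro choice_dynamics_coordinate_uniformly_continuous[OF game _ _ br ode]) auto
  fix t :: real assume "t \<in> {0..}"
  then have xm: "x t l \<in> mixed A l"
    using br l L by (auto simp: regularized_argmax_def)
  have "finite (A l)"
    using game l L unfolding finite_game_def by blast
  then show "\<bar>x t l (\<beta> l)\<bar> \<le> 1"
    using mixed_nonneg[OF xm] mixed_le_one[OF _ xm] by (simp add: abs_le_iff)
qed

lemma weakly_dominated_pure_profile_le:
  assumes game: "finite_game N A" and dom: "weakly_dominated N A U k p p'"
    and \<beta>: "\<beta> \<in> PiE (N - {k}) A"
  shows "exp_payoff N A U k ((\<lambda>l. pure (\<beta> l))(k := p)) \<le> exp_payoff N A U k ((\<lambda>l. pure (\<beta> l))(k := p'))"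
proof -
  have "\<forall>l\<in>N - {k}. pure (\<beta> l) \<in> mixed A l"
    using game \<beta> unfolding finite_game_def by (auto intro!: pure_mixed simp: PiE_iff)
  then show ?thesis
    using dom unfolding weakly_dominated_def by auto
qed

theorem proposition4p3:
  fixes N :: "'n set" and A :: "'n \<Rightarrow> 'a set"
    and U :: "'n \<Rightarrow> ('n \<Rightarrow> 'a) \<Rightarrow> real"
    and h :: "'n \<Rightarrow> ('a \<Rightarrow> real) \<Rightarrow> real"
    and y x :: "real \<Rightarrow> 'n \<Rightarrow> 'a \<Rightarrow> real"
    and k :: 'n and p p' :: "'a \<Rightarrow> real"
  assumes game: "finite_game N A"
    and pen: "\<forall>l\<in>N. penalty A l (h l)"
    and xQ: "\<forall>t\<ge>0. \<forall>l\<in>N. x t l = choice A h l (y t l)"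
    and ode: "\<forall>t\<ge>0. \<forall>l\<in>N. \<forall>\<alpha>\<in>A l.
               ((\<lambda>s. y s l \<alpha>) has_real_derivative payoff_vec N A U l (x t) \<alpha>) (at t within {0..})"
    and k: "k \<in> N"
    and p: "p \<in> mixed A k" and p': "p' \<in> mixed A k"
    and dom: "weakly_dominated N A U k p p'"
  shows "((\<lambda>t. Min {x t k \<alpha> | \<alpha>. \<alpha> \<in> A k \<and> p \<alpha> \<noteq> 0}) \<longlongrightarrow> 0) at_top
         \<or> (\<forall>\<alpha>\<in>PiE (N - {k}) A.
              exp_payoff N A U k ((\<lambda>l. pure (\<alpha> l))(k := p))
                < exp_payoff N A U k ((\<lambda>l. pure (\<alpha> l))(k := p'))
              \<longrightarrow> ((\<lambda>t. \<Prod>l\<in>N - {k}. x t l (\<alpha> l)) \<longlongrightarrow> 0) at_top)"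
proof -
  have finN: "finite N" and finA: "\<And>l. l \<in> N \<Longrightarrow> finite (A l)"
    and neA: "\<And>l. l \<in> N \<Longrightarrow> A l \<noteq> {}"
    using game unfolding finite_game_def by auto
  have br: "regularized_argmax A l (h l) (y t l) (x t l)" if "t \<ge> 0" "l \<in> N" for t l
    using regularized_argmax_choice[of A l h] finA neA pen xQ that by simp
  define gain where "gain \<beta> = exp_payoff N A U k ((\<lambda>l. pure (\<beta> l))(k := p'))
      - exp_payoff N A U k ((\<lambda>l. pure (\<beta> l))(k := p))" for \<beta>
  define w where "w \<beta> = (\<lambda>t. \<Prod>l\<in>N - {k}. x t l (\<beta> l))" for \<beta>
  define V where "V t = pairing A k (y t k) (\<lambda>a. p' a - p a)" for t
  define D where "D t = (\<Sum>\<beta>\<in>PiE (N - {k}) A. w \<beta> t * gain \<beta>)" for t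
  have V': "(V has_real_derivative D t) (at t within {0..})" if "t \<ge> 0" for t
    unfolding V_def D_def w_def gain_def using ode that k by (intro score_gap_has_derivative[OF game k]) auto
  have gain_nonneg: "0 \<le> gain \<beta>" if "\<beta> \<in> PiE (N - {k}) A" for \<beta>
    using weakly_dominated_pure_profile_le[OF game dom that] by (simp add: gain_def)
  have w_nonneg: "0 \<le> w \<beta> t" if "t \<ge> 0" for \<beta> t
    unfolding w_def by (rule prod_nonneg) (meson DiffD1 br[OF that] mixed_nonneg regularized_argmax_def)
  have finPi: "finite (PiE (N - {k}) A)"
    using finN finA by (intro finite_PiE) auto
  have gain_le_D: "gain \<beta> * w \<beta> t \<le> D t" if "\<beta> \<in> PiE (N - {k}) A" "t \<ge> 0" for \<beta> t
  proof -
    have "w \<beta> t * gain \<beta> \<le> D t"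
      unfolding D_def using that finPi w_nonneg gain_nonneg by (intro member_le_sum) auto
    then show ?thesis by (simp add: mult.commute)
  qed
  have D_nonneg: "0 \<le> D t" if "t \<ge> 0" for t
    unfolding D_def using w_nonneg[OF that] gain_nonneg by (intro sum_nonneg) auto
  show ?thesis
  proof (cases "bdd_above (V ` {0..})")
    case False
    have "V s \<le> V t" if "0 \<le> s" "s \<le> t" for s t :: real
      by (rule increasing_if_nonneg_derivative[OF V' D_nonneg that])
    then have "filterlim V at_top at_top"
      by (rule filterlim_at_top_if_increasing_unbounded[OF _ False])
    then show ?thesis
      using br k finA pen p p' unfolding V_def penalty_def
      by (intro disjI1 support_min_tendsto_zero_if_score_gap_unbounded[of A k "h k"]) auto
  next
    case True
    have "(w \<beta> \<longlongrightarrow> 0) at_top" if "\<beta> \<in> PiE (N - {k}) A" "0 < gain \<beta>" for \<beta>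
      using choice_dynamics_weight_uniformly_continuous[OF game _ pen br ode, of "N - {k}" \<beta>]
      by (intro barbalat_tendsto_zero[OF V' True that(2) w_nonneg gain_le_D[OF that(1)]])
        (auto simp: w_def)
    then show ?thesis
      by (intro disjI2) (auto simp: gain_def w_def)
  qed
qed

end
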